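(* Let $(X,\preceq)$ be a partially ordered set and suppose there is a metric $d$ on $X$ such that $(X,d)$ is complete and $X$ is regular. Let $f,g,H:X\to X$ be mappings such that: (a) $f(X)\subseteq H(X)$ and $g(X)\subseteq H(X)$; (b) $H(X)$ is a closed subset of $(X,d)$; (c) $f$ and $g$ are weakly increasing with respect to $H$. Suppose there is $\beta\in\mathcal S$ such that for every $(x,y)\in X\times X$ with $Hx$ and $Hy$ comparable, $$d(fx,gy)\le \beta\big(d(Hx,Hy)\big)\,d(Hx,Hy).$$ Then there exists $u\in X$ with $fu=gu=Hu$.
   Context: $X$ is regular means: if $(z_n)$ is a non-decreasing sequence in $X$ with respect to $\preceq$ and $z_n\to z$ in $(X,d)$, then $z_n\preceq z$ for all $n$. $\mathcal S$ denotes the class of functions $\beta:[0,\infty)\to[0,1)$ such that for every sequence $(t_n)$ in $[0,\infty)$, $\beta(t_n)\to 1$ implies $t_n\to 0$. For $R:X\to X$ and $x\in X$, $R^{-1}(x)=\{u\in X: Ru=x\}$. Given mappings $T,S,R:X\to X$ on a partially ordered set with $T(X)\subseteq R(X)$ and $S(X)\subseteq R(X)$, $S$ and $T$ are weakly increasing with respect to $R$ if for all $x\in X$: $Tx\preceq Sy$ for all $y\in R^{-1}(Tx)$, and $Sx\preceq Ty$ for all $y\in R^{-1}(Sx)$. *)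

theory Defs
  imports "HOL-Analysis.Analysis"
begin

text \<open>The partial order on X is an explicit relation le (the type carries the metric).\<close>

definition partial_order_rel :: "('a \<Rightarrow> 'a \<Rightarrow> bool) \<Rightarrow> bool" where
  "partial_order_rel le \<longleftrightarrow>
     (\<forall>x. le x x) \<and> (\<forall>x y. le x y \<and> le y x \<longrightarrow> x = y) \<and>
     (\<forall>x y z. le x y \<and> le y z \<longrightarrow> le x z)"

definition regular_ord :: "('a::metric_space \<Rightarrow> 'a \<Rightarrow> bool) \<Rightarrow> bool" where
  "regular_ord le \<longleftrightarrow>
     (\<forall>(z::nat \<Rightarrow> 'a) z0. monotone (\<le>) le z \<and> z \<longlonglongrightarrow> z0 \<longrightarrow> (\<forall>n. le (z n) z0))"

definition class_S :: "(real \<Rightarrow> real) \<Rightarrow> bool" where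
  "class_S \<beta> \<longleftrightarrow>
     (\<forall>t\<ge>0. 0 \<le> \<beta> t \<and> \<beta> t < 1) \<and>
     (\<forall>t :: nat \<Rightarrow> real. (\<forall>n. 0 \<le> t n) \<longrightarrow> (\<lambda>n. \<beta> (t n)) \<longlonglongrightarrow> 1 \<longrightarrow> t \<longlonglongrightarrow> 0)"

text \<open>S and T weakly increasing with respect to R (range inclusions stated separately).\<close>
definition weakly_increasing_wrt ::
  "('a \<Rightarrow> 'a \<Rightarrow> bool) \<Rightarrow> ('a \<Rightarrow> 'a) \<Rightarrow> ('a \<Rightarrow> 'a) \<Rightarrow> ('a \<Rightarrow> 'a) \<Rightarrow> bool" where
  "weakly_increasing_wrt le T S R \<longleftrightarrow>
     (\<forall>x. (\<forall>y. R y = T x \<longrightarrow> le (T x) (S y)) \<and> (\<forall>y. R y = S x \<longrightarrow> le (S x) (T y)))"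

end

theory Submission
  imports Defs
begin

(* Taking x = y in the contraction condition gives dist (f x) (g x) <= beta 0 * 0,
   so f and g agree everywhere.  Since range f is contained in range H we can build
   a Jungck sequence x with H (x (n+1)) = f (x n); weak increasingness makes
   y n = f (x n) a non-decreasing chain, so all its terms are comparable and the
   contraction condition holds between any two of them.  The general analytic part
   of the file shows that such a Geraghty-contractive sequence is Cauchy: first the
   consecutive distances tend to 0, then a failure of the Cauchy property would
   force beta to tend to 1 along distances bounded away from 0, contradicting
   beta in S.  The limit z lies in the closed set range H, say z = H u; regularity
   makes every y n comparable with H u, hence y (n+1) -> f u, and f u = z. *)

lemma class_S_bounds:
  assumes "class_S \<beta>" and "t \<ge> 0"
  shows "0 \<le> \<beta> t" and "\<beta> t < 1"
  using assms unfolding class_S_def by auto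

lemma class_S_nonexpansive:
  assumes "class_S \<beta>" and "t \<ge> 0"
  shows "\<beta> t * t \<le> t"
  using class_S_bounds[OF assms] \<open>t \<ge> 0\<close> by (simp add: mult_left_le_one_le)

text \<open>A consequence of \<open>\<beta> \<in> S\<close> used twice: along a sequence bounded away from zero,
  the defects \<open>t k * (1 - \<beta> (t k))\<close> cannot be dominated by a null sequence,
  because this would force \<open>\<beta> (t k) \<rightarrow> 1\<close> and hence \<open>t k \<rightarrow> 0\<close>.\<close>

lemma class_S_defect_not_null:
  fixes t e :: "nat \<Rightarrow> real"
  assumes beta: "class_S \<beta>" and eps: "\<epsilon> > 0" and t_ge: "\<And>k. t k \<ge> \<epsilon>"
    and defect: "\<And>k. t k * (1 - \<beta> (t k)) \<le> e k" and e_null: "e \<longlonglongrightarrow> 0"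
  shows False
proof -
  have t_nonneg: "t k \<ge> 0" for k
    using t_ge[of k] eps by linarith
  have gap_bound: "1 - \<beta> (t k) \<le> e k / \<epsilon>" for k
  proof -
    have "\<epsilon> * (1 - \<beta> (t k)) \<le> t k * (1 - \<beta> (t k))"
      using t_ge[of k] class_S_bounds[OF beta t_nonneg[of k]] by (intro mult_right_mono) auto
    also have "\<dots> \<le> e k" by (rule defect)
    finally show ?thesis
      using eps by (simp add: pos_le_divide_eq mult.commute)
  qed
  have "(\<lambda>k. e k / \<epsilon>) \<longlonglongrightarrow> 0"
    using tendsto_divide_zero[OF e_null] .
  then have "(\<lambda>k. 1 - \<beta> (t k)) \<longlonglongrightarrow> 0"
    by (rule tendsto_sandwich[rotated 2, OF tendsto_const])
       (use gap_bound less_imp_le[OF class_S_bounds(2)[OF beta t_nonneg]] in auto)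
  then have "(\<lambda>k. \<beta> (t k)) \<longlonglongrightarrow> 1"
    using tendsto_diff[OF tendsto_const[of 1], of "\<lambda>k. 1 - \<beta> (t k)" 0] by simp
  then have "t \<longlonglongrightarrow> 0"
    using beta t_nonneg unfolding class_S_def by blast
  then have "\<epsilon> \<le> 0"
    by (rule LIMSEQ_le_const) (use t_ge in blast)
  with eps show False by simp
qed

lemma class_S_decreasing:
  fixes d :: "nat \<Rightarrow> real"
  assumes beta: "class_S \<beta>" and d_nonneg: "\<And>n. d n \<ge> 0"
    and step: "\<And>n. d (Suc n) \<le> \<beta> (d n) * d n"
  shows "decseq d"
  using step class_S_nonexpansive[OF beta d_nonneg] order_trans by (blast intro: decseq_SucI)

lemma class_S_iteration_tendsto_zero:
  fixes d :: "nat \<Rightarrow> real"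
  assumes beta: "class_S \<beta>" and d_nonneg: "\<And>n. d n \<ge> 0"
    and step: "\<And>n. d (Suc n) \<le> \<beta> (d n) * d n"
  shows "d \<longlonglongrightarrow> 0"
proof -
  obtain L where d_lim: "d \<longlonglongrightarrow> L" and L_le: "\<And>n. L \<le> d n"
    using decseq_convergent[OF class_S_decreasing[of \<beta> d, OF beta d_nonneg step], of 0] d_nonneg by blast
  have "L \<ge> 0"
    by (rule LIMSEQ_le_const[OF d_lim]) (use d_nonneg in auto)
  moreover have "\<not> L > 0"
  proof
    assume L_pos: "L > 0"
    have defect: "d n * (1 - \<beta> (d n)) \<le> d n - d (Suc n)" for n
      using step[of n] by (simp add: algebra_simps)
    have "(\<lambda>n. d n - d (Suc n)) \<longlonglongrightarrow> 0"
      using tendsto_diff[OF d_lim LIMSEQ_Suc[OF d_lim]] by simp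
    then show False
      by (rule class_S_defect_not_null[OF beta L_pos L_le defect])
  qed
  ultimately show ?thesis
    using d_lim by fastforce
qed

lemma class_S_contractive_Cauchy:
  fixes y :: "nat \<Rightarrow> 'a::metric_space"
  assumes beta: "class_S \<beta>"
    and contr: "\<And>m n. dist (y (Suc m)) (y (Suc n)) \<le> \<beta> (dist (y m) (y n)) * dist (y m) (y n)"
  shows "Cauchy y"
proof (rule ccontr)
  define d where "d n = dist (y n) (y (Suc n))" for n
  have d_nonneg: "d n \<ge> 0" for n
    unfolding d_def by simp
  have d_step: "d (Suc n) \<le> \<beta> (d n) * d n" for n
    unfolding d_def by (rule contr)
  have d_null: "d \<longlonglongrightarrow> 0"
    using class_S_iteration_tendsto_zero[of \<beta> d, OF beta d_nonneg d_step] .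
  have d_dec: "decseq d"
    using class_S_decreasing[of \<beta> d, OF beta d_nonneg d_step] .
  have d_null_later: "(\<lambda>k. d (s k)) \<longlonglongrightarrow> 0" if "\<And>k. k \<le> s k" for s :: "nat \<Rightarrow> nat"
    by (rule tendsto_sandwich[OF _ _ tendsto_const d_null])
       (use d_nonneg d_dec that in \<open>auto simp: decseq_def\<close>)
  assume "\<not> Cauchy y"
  then obtain \<epsilon> where eps: "\<epsilon> > 0" and "\<And>k. \<exists>m\<ge>k. \<exists>n\<ge>k. \<epsilon> \<le> dist (y m) (y n)"
    unfolding Cauchy_def by (meson not_less)
  then obtain ms ns where idx: "\<And>k. k \<le> ms k \<and> k \<le> ns k \<and> \<epsilon> \<le> dist (y (ms k)) (y (ns k))"
    by metis
  define t where "t k = dist (y (ms k)) (y (ns k))" for k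
  have defect: "t k * (1 - \<beta> (t k)) \<le> d (ms k) + d (ns k)" for k
  proof -
    have "t k \<le> d (ms k) + dist (y (Suc (ms k))) (y (Suc (ns k))) + d (ns k)"
      unfolding t_def d_def
      using dist_triangle[of "y (ms k)" "y (ns k)" "y (Suc (ms k))"]
            dist_triangle[of "y (Suc (ms k))" "y (ns k)" "y (Suc (ns k))"]
      by (simp add: dist_commute)
    also have "\<dots> \<le> d (ms k) + \<beta> (t k) * t k + d (ns k)"
      using contr[of "ms k" "ns k"] unfolding t_def by simp
    finally show ?thesis by (simp add: algebra_simps)
  qed
  have t_ge: "\<epsilon> \<le> t k" for k
    using idx unfolding t_def by blast
  have "(\<lambda>k. d (ms k) + d (ns k)) \<longlonglongrightarrow> 0"
    using tendsto_add[OF d_null_later d_null_later] idx by fastforce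
  then show False
    by (rule class_S_defect_not_null[OF beta eps t_ge defect])
qed

lemma monotone_from_steps:
  assumes po: "partial_order_rel le" and step: "\<And>n. le (y n) (y (Suc n))"
  shows "monotone (\<le>) le y"
proof (rule monotoneI)
  fix m n :: nat
  assume "m \<le> n"
  then show "le (y m) (y n)"
  proof (induction n rule: dec_induct)
    case base
    then show ?case using po unfolding partial_order_rel_def by blast
  next
    case (step n)
    then show ?case using po assms(2)[of n] unfolding partial_order_rel_def by blast
  qed
qed

lemma monotone_comparable:
  fixes y :: "nat \<Rightarrow> 'a"
  assumes "monotone (\<le>) le y"
  shows "le (y m) (y n) \<or> le (y n) (y m)"
  using assms nat_le_linear[of m n] unfolding monotone_def by blast

lemma Jungck_sequence:
  assumes "range f \<subseteq> range H"
  obtains x :: "nat \<Rightarrow> 'a" where "\<And>n. H (x (Suc n)) = f (x n)"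
proof -
  define F where "F p = (SOME q. H q = f p)" for p
  have HF: "H (F p) = f p" for p
  proof -
    have "\<exists>q. H q = f p"
      using subsetD[OF assms rangeI, of p] by (metis imageE)
    then show ?thesis
      unfolding F_def by (rule someI_ex)
  qed
  show ?thesis
    by (rule that[of "\<lambda>n. (F ^^ n) undefined"]) (simp only: funpow.simps comp_apply HF)
qed

lemma shifted_limit_unique:
  fixes y :: "nat \<Rightarrow> 'a::metric_space"
  assumes lim: "y \<longlonglongrightarrow> z" and closer: "\<And>n. dist (y (Suc n)) w \<le> dist (y n) z"
  shows "w = z"
proof -
  have "(\<lambda>n. dist (y n) z) \<longlonglongrightarrow> 0"
    using lim by (rule tendsto_dist_iff[THEN iffD1])
  then have "(\<lambda>n. dist (y (Suc n)) w) \<longlonglongrightarrow> 0"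
    by (rule tendsto_sandwich[rotated 2, OF tendsto_const]) (use closer in auto)
  then have "(\<lambda>n. y (Suc n)) \<longlonglongrightarrow> w"
    by (rule tendsto_dist_iff[THEN iffD2])
  then show ?thesis
    using LIMSEQ_Suc[OF lim] by (rule LIMSEQ_unique)
qed

lemma contraction_diagonal:
  assumes refl: "le (H x) (H x)"
    and contr: "\<And>x y. le (H x) (H y) \<or> le (H y) (H x) \<Longrightarrow>
                  dist (f x) (g y) \<le> \<beta> (dist (H x) (H y)) * dist (H x) (H y)"
  shows "f x = g x"
  using contr[of x x] refl by simp

lemma Jungck_values_increase:
  assumes wi: "weakly_increasing_wrt le f g H" and fg: "\<And>x. f x = g x"
    and Hx: "\<And>n. H (x (Suc n)) = f (x n)"
  shows "le (f (x n)) (f (x (Suc n)))"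
proof -
  have "le (f (x n)) (g (x (Suc n)))"
    using wi Hx[of n] unfolding weakly_increasing_wrt_def by blast
  then show ?thesis
    by (simp add: fg)
qed

theorem theorem2p6:
  fixes le :: "'a::complete_space \<Rightarrow> 'a \<Rightarrow> bool"
    and f g H :: "'a \<Rightarrow> 'a"
    and \<beta> :: "real \<Rightarrow> real"
  assumes po: "partial_order_rel le"
    and reg: "regular_ord le"
    and a1: "range f \<subseteq> range H" and a2: "range g \<subseteq> range H"
    and b: "closed (range H)"
    and c: "weakly_increasing_wrt le f g H"
    and beta: "class_S \<beta>"
    and contr: "\<And>x y. le (H x) (H y) \<or> le (H y) (H x) \<Longrightarrow>
                  dist (f x) (g y) \<le> \<beta> (dist (H x) (H y)) * dist (H x) (H y)"
  shows "\<exists>u. f u = g u \<and> g u = H u"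
proof -
  have refl: "\<And>x. le x x"
    using po unfolding partial_order_rel_def by blast
  have fg: "f x = g x" for x
    by (rule contraction_diagonal[of le H x, OF refl contr])
  obtain x where Hx: "\<And>n. H (x (Suc n)) = f (x n)"
    using Jungck_sequence[OF a1] by blast
  define y where "y n = f (x n)" for n
  have chain: "monotone (\<le>) le y"
    using Jungck_values_increase[of le f g H x, OF c fg Hx] unfolding y_def by (rule monotone_from_steps[OF po])
  have "dist (y (Suc m)) (y (Suc n)) \<le> \<beta> (dist (y m) (y n)) * dist (y m) (y n)" for m n
    using contr[of "x (Suc m)" "x (Suc n)"] monotone_comparable[OF chain, of m n] fg Hx
    unfolding y_def by simp
  then have "Cauchy y"
    by (rule class_S_contractive_Cauchy[OF beta])
  then obtain z where lim: "y \<longlonglongrightarrow> z"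
    by (auto simp: Cauchy_convergent_iff convergent_def)
  have "y n \<in> range H" for n
    using rangeI[of H "x (Suc n)"] unfolding y_def Hx .
  then obtain u where z: "z = H u"
    using closed_sequentially[OF b _ lim] by blast
  text \<open>Regularity makes \<open>H u\<close> an upper bound of the chain, hence comparable with it.\<close>
  have "le (y n) (H u)" for n
    using reg chain lim unfolding regular_ord_def z by blast
  then have "dist (y (Suc n)) (f u) \<le> \<beta> (dist (y n) z) * dist (y n) z" for n
    using contr[of "x (Suc n)" u] Hx fg z unfolding y_def by simp
  then have "dist (y (Suc n)) (f u) \<le> dist (y n) z" for n
    by (rule order_trans[OF _ class_S_nonexpansive[OF beta zero_le_dist]])
  then have "f u = z"
    by (rule shifted_limit_unique[OF lim])
  then show ?thesis
    using fg z by auto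
qed

end
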